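(* Let $N\ge 1$ and $m\ge 1$ be integers and let \[ \mathcal A=\begin{bmatrix} \hat A_H & e_m\otimes B_H & 0\\ e_m^{T}\otimes C & A & e_1^{T}\otimes B\\ 0 & e_1\otimes C_h & \hat A_h\end{bmatrix}\in\mathbb R^{N(2m+1)\times N(2m+1)}, \] where $\hat A_H,\hat A_h\in\mathbb R^{Nm\times Nm}$, $A,B,C,B_H,C_h\in\mathbb R^{N\times N}$, and $e_1,e_m$ are the first and last canonical basis vectors of $\mathbb R^m$. Suppose the matrices \[ A_1=\begin{bmatrix}\hat A_H & e_m\otimes B_H\\ e_m^{T}\otimes C & A\end{bmatrix},\qquad A_2=\begin{bmatrix} A & e_1^{T}\otimes B\\ e_1\otimes C_h & \hat A_h\end{bmatrix}\in\mathbb R^{N(m+1)\times N(m+1)} \] are nonsingular, and let $T_{12}$, $T_{21}$, $P^{(i)}$, $\Pi^{(i)}$, $P^{(i)}_j$ be as defined in the context. Define \[ V_1=\begin{bmatrix} -P^{(1)}\\ \Pi^{(2)}P^{(1)}_m\\ P^{(2)}P^{(1)}_m\end{bmatrix},\qquad V_2=\begin{bmatrix} P^{(1)}P^{(2)}_1\\ \Pi^{(1)}P^{(2)}_1\\ -P^{(2)}\end{bmatrix}\in\mathbb R^{N(2m+1)\times N}, \] and let $f_m,f_{m+2}$ denote the $m$-th and $(m+2)$-th canonical basis vectors of $\mathbb R^{2m+1}$. Then $\mathrm{rank}(T_{12})\le N$, $\mathrm{rank}(T_{21})\le N$, and for all $k\ge 0$, \[ T_{12}^{k+1}=V_1\bigl(P^{(2)}_1P^{(1)}_m\bigr)^{k}(f_{m+2}^{T}\otimes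 I_N),\qquad T_{21}^{k+1}=V_2\bigl(P^{(1)}_mP^{(2)}_1\bigr)^{k}(f_{m}^{T}\otimes I_N). \]
   Context: Restriction operators: $R_1=[I_{N(m+1)}\;\,0]$ and $R_2=[0\;\,I_{N(m+1)}]$, both in $\mathbb R^{N(m+1)\times N(2m+1)}$; note $A_i=R_i\mathcal A R_i^{T}$. Projections $P_i=R_i^{T}A_i^{-1}R_i\mathcal A$, $Q_i=I-P_i$ ($i=1,2$), and the multiplicative Schwarz iteration matrices $T_{12}=Q_2Q_1$, $T_{21}=Q_1Q_2$. With $\hat e_1,\hat e_{m+1}$ the first and last canonical basis vectors of $\mathbb R^{m+1}$, define $\Pi^{(1)},\Pi^{(2)}\in\mathbb R^{N\times N}$ and $P^{(1)},P^{(2)}\in\mathbb R^{Nm\times N}$ by $\begin{bmatrix}P^{(1)}\\ \Pi^{(1)}\end{bmatrix}=A_1^{-1}(\hat e_{m+1}\otimes B)$ and $\begin{bmatrix}\Pi^{(2)}\\ P^{(2)}\end{bmatrix}=A_2^{-1}(\hat e_{1}\otimes C)$, and partition $P^{(i)}=[(P^{(i)}_1)^{T},\dots,(P^{(i)}_m)^{T}]^{T}$ with $P^{(i)}_j\in\mathbb R^{N\times N}$. $\otimes$ denotes the Kronecker product. *)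

theory Defs
  imports "Jordan_Normal_Form.Matrix" "Jordan_Normal_Form.DL_Rank"
begin

definition kron_mat :: "'a :: times mat \<Rightarrow> 'a mat \<Rightarrow> 'a mat" where
  "kron_mat A B = mat (dim_row A * dim_row B) (dim_col A * dim_col B)
     (\<lambda>(i,j). A $$ (i div dim_row B, j div dim_col B) * B $$ (i mod dim_row B, j mod dim_col B))"

text \<open>k-th canonical basis vector of R^n as an n x 1 column matrix (1-based index k).\<close>
definition unit_col :: "nat \<Rightarrow> nat \<Rightarrow> 'a :: {zero,one} mat" where
  "unit_col n k = mat n 1 (\<lambda>(i,j). if i = k - 1 then 1 else 0)"

definition append_cols_mat :: "'a :: zero mat \<Rightarrow> 'a mat \<Rightarrow> 'a mat" where
  "append_cols_mat A B = four_block_mat A B (0\<^sub>m 0 (dim_col A)) (0\<^sub>m 0 (dim_col B))"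

definition block3_mat :: "'a :: zero mat \<Rightarrow> 'a mat \<Rightarrow> 'a mat \<Rightarrow> 'a mat \<Rightarrow> 'a mat \<Rightarrow> 'a mat
    \<Rightarrow> 'a mat \<Rightarrow> 'a mat \<Rightarrow> 'a mat \<Rightarrow> 'a mat" where
  "block3_mat A11 A12 A13 A21 A22 A23 A31 A32 A33 =
     four_block_mat (four_block_mat A11 A12 A21 A22) (A13 @\<^sub>r A23)
                    (append_cols_mat A31 A32) A33"

definition sub_block :: "'a mat \<Rightarrow> nat \<Rightarrow> nat \<Rightarrow> nat \<Rightarrow> nat \<Rightarrow> 'a mat" where
  "sub_block M r0 c0 nr nc = mat nr nc (\<lambda>(i,j). M $$ (i + r0, j + c0))"

definition inv_mat :: "'a :: semiring_1 mat \<Rightarrow> 'a mat" where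
  "inv_mat A = (SOME B. B \<in> carrier_mat (dim_row A) (dim_row A) \<and> inverts_mat A B \<and> inverts_mat B A)"

definition mat_rank :: "'a :: field mat \<Rightarrow> nat" where
  "mat_rank M = vec_space.rank (dim_row M) M"

end

theory Submission
  imports Defs
begin

(* Subdomain i meets the rest of the domain only through one block column: R1 calA = A1 R1 +
   (e_(m+1) (x) B) F2 and R2 calA = A2 R2 + (e_1 (x) C) F1, where F2 and F1 select the blocks
   m+2 and m. Hence Q1 = D1 - W1 F2 and Q2 = D2 - W2 F1, with D1, D2 the coordinate projections
   onto the complements of the subdomains and W1 = R1^T X1, W2 = R2^T X2 matrices with N columns.
   Since D2 D1 = 0 and F1 D1 = 0, the product Q2 Q1 collapses to V1 F2 with V1 = W2 P^(1)_m - D2 W1,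
   so rank T12 <= N and T12^(k+1) = V1 (F2 V1)^k F2, where F2 V1 = P^(2)_1 P^(1)_m.
   T21 is symmetric. *)

lemma sum_shifted_delta:
  "(\<Sum>k = 0..<r. if (j::nat) = k + s then f k else 0)
    = (if s \<le> j \<and> j < s + r then f (j - s) else (0::'a::comm_monoid_add))"
proof -
  have "(\<Sum>k = 0..<r. if j = k + s then f k else 0)
      = (\<Sum>k = 0..<r. if k = j - s \<and> s \<le> j then f k else 0)"
    by (intro sum.cong refl if_cong) auto
  then show ?thesis by (auto simp: sum.delta')
qed

definition row_selector :: "nat \<Rightarrow> nat \<Rightarrow> nat \<Rightarrow> 'a :: {zero,one} mat" where
  "row_selector r c s = mat r c (\<lambda>(i,j). if j = i + s then 1 else 0)"

lemma row_selector_carrier [simp]: "row_selector r c s \<in> carrier_mat r c"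
  by (simp add: row_selector_def)

lemma row_selector_mult:
  fixes M :: "'a :: semiring_1 mat"
  assumes "M \<in> carrier_mat c d" and "s + r \<le> c"
  shows "row_selector r c s * M = sub_block M s 0 r d"
  using assms
  by (intro eq_matI)
    (auto simp: row_selector_def sub_block_def scalar_prod_def if_distrib[of "\<lambda>x. x * _"] sum.delta'
      cong: if_cong)

lemma mult_row_selector:
  fixes M :: "'a :: semiring_1 mat"
  assumes "M \<in> carrier_mat a r"
  shows "M * row_selector r c s = mat a c (\<lambda>(i,j). if s \<le> j \<and> j < s + r then M $$ (i, j - s) else 0)"
  using assms
  by (intro eq_matI)
    (auto simp: row_selector_def scalar_prod_def if_distrib[of "\<lambda>x. _ * x"] sum_shifted_delta
      cong: if_cong)

lemma transpose_row_selector_mult: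
  fixes M :: "'a :: semiring_1 mat"
  assumes "M \<in> carrier_mat r d"
  shows "transpose_mat (row_selector r c s) * M
    = mat c d (\<lambda>(i,j). if s \<le> i \<and> i < s + r then M $$ (i - s, j) else 0)"
  using assms
  by (intro eq_matI)
    (auto simp: row_selector_def scalar_prod_def if_distrib[of "\<lambda>x. x * _"] sum_shifted_delta
      cong: if_cong)

lemma sub_block_mult:
  fixes M :: "'a :: semiring_1 mat"
  assumes M: "M \<in> carrier_mat a b" and P: "P \<in> carrier_mat b d" and "r0 + nr \<le> a"
  shows "sub_block M r0 0 nr b * P = sub_block (M * P) r0 0 nr d"
proof -
  have "sub_block M r0 0 nr b * P = row_selector nr a r0 * M * P"
    using assms by (simp add: row_selector_mult)
  also have "\<dots> = row_selector nr a r0 * (M * P)"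
    using M P by (simp add: assoc_mult_mat[of _ nr a])
  also have "\<dots> = sub_block (M * P) r0 0 nr d"
    using assms by (simp add: row_selector_mult)
  finally show ?thesis .
qed

definition coord_projection :: "nat \<Rightarrow> (nat \<Rightarrow> bool) \<Rightarrow> 'a :: {zero,one} mat" where
  "coord_projection n P = mat n n (\<lambda>(i,j). if i = j \<and> P i then 1 else 0)"

lemma coord_projection_carrier [simp]: "coord_projection n P \<in> carrier_mat n n"
  by (simp add: coord_projection_def)

lemma coord_projection_mult:
  fixes M :: "'a :: semiring_1 mat"
  assumes "M \<in> carrier_mat n d"
  shows "coord_projection n P * M = mat n d (\<lambda>(i,j). if P i then M $$ (i, j) else 0)"
  using assms
  by (intro eq_matI)
    (auto simp: coord_projection_def scalar_prod_def if_distrib[of "\<lambda>x. x * _"] sum.delta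
      cong: if_cong)

lemma div_eq_iff_block:
  fixes i a q :: nat
  assumes "0 < a"
  shows "i div a = q \<longleftrightarrow> a * q \<le> i \<and> i < a * q + a"
proof
  assume "i div a = q"
  then have "a * q + i mod a = i" by (metis mult_div_mod_eq)
  moreover have "i mod a < a" using assms by simp
  ultimately show "a * q \<le> i \<and> i < a * q + a" by linarith
qed (auto intro: div_nat_eqI)

lemma kron_unit_col:
  fixes M :: "'a :: semiring_1 mat"
  assumes M: "M \<in> carrier_mat a b"
  shows "kron_mat (unit_col p k) M
    = mat (a * p) b (\<lambda>(i,j).
        if a * (k - 1) \<le> i \<and> i < a * (k - 1) + a then M $$ (i - a * (k - 1), j) else 0)"
    (is "?K = ?R")
proof (rule eq_matI)
  fix i j assume i: "i < dim_row ?R" and j: "j < dim_col ?R"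
  then have "i < a * p" by simp
  then have "0 < a" "i div a < p" by (auto intro: gr0I simp: less_mult_imp_div_less mult.commute)
  then show "?K $$ (i, j) = ?R $$ (i, j)"
    using i j M div_eq_iff_block[of a i "k - 1"] minus_div_mult_eq_mod[of i a]
    by (auto simp: kron_mat_def unit_col_def mult.commute)
qed (use M in \<open>auto simp: kron_mat_def unit_col_def\<close>)

lemma kron_unit_row:
  fixes M :: "'a :: semiring_1 mat"
  assumes M: "M \<in> carrier_mat a b"
  shows "kron_mat (transpose_mat (unit_col p k)) M
    = mat a (b * p) (\<lambda>(i,j).
        if b * (k - 1) \<le> j \<and> j < b * (k - 1) + b then M $$ (i, j - b * (k - 1)) else 0)"
    (is "?K = ?R")
proof (rule eq_matI)
  fix i j assume i: "i < dim_row ?R" and j: "j < dim_col ?R"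
  then have "j < b * p" by simp
  then have "0 < b" "j div b < p" by (auto intro: gr0I simp: less_mult_imp_div_less mult.commute)
  then show "?K $$ (i, j) = ?R $$ (i, j)"
    using i j M div_eq_iff_block[of b j "k - 1"] minus_div_mult_eq_mod[of j b]
    by (auto simp: kron_mat_def unit_col_def mult.commute)
qed (use M in \<open>auto simp: kron_mat_def unit_col_def\<close>)

lemma kron_unit_row_one:
  "kron_mat (transpose_mat (unit_col p k)) (1\<^sub>m a)
    = (row_selector a (a * p) (a * (k - 1)) :: 'a :: semiring_1 mat)"
  by (intro eq_matI) (auto simp: kron_unit_row[OF one_carrier_mat] row_selector_def)

lemma invertible_inv_mat:
  fixes M :: "'a :: semiring_1 mat"
  assumes M: "M \<in> carrier_mat n n" and "invertible_mat M"
  shows "inv_mat M \<in> carrier_mat n n" and "inv_mat M * M = 1\<^sub>m n"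
proof -
  obtain M' where M': "M * M' = 1\<^sub>m n" "M' * M = 1\<^sub>m (dim_row M')"
    using assms unfolding invertible_mat_def inverts_mat_def by auto
  then have "M' \<in> carrier_mat n n"
    using M by (metis carrier_matD carrier_matI index_mult_mat(2,3) index_one_mat(2,3))
  with M M' have "\<exists>B. B \<in> carrier_mat (dim_row M) (dim_row M) \<and> inverts_mat M B \<and> inverts_mat B M"
    unfolding inverts_mat_def by auto
  then have "inv_mat M \<in> carrier_mat n n \<and> inverts_mat (inv_mat M) M"
    unfolding inv_mat_def using M by (metis (mono_tags, lifting) carrier_matD(1) someI_ex)
  then show "inv_mat M \<in> carrier_mat n n" and "inv_mat M * M = 1\<^sub>m n"
    unfolding inverts_mat_def by auto
qed

lemma rank_sum_outer_products_le:
  fixes V F :: "'a :: field mat"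
  assumes V: "V \<in> carrier_mat n q" and F: "F \<in> carrier_mat q c" and "p \<le> q"
  shows "vec_space.rank n (mat n c (\<lambda>(i,j). \<Sum>l<p. V $$ (i,l) * F $$ (l,j))) \<le> p"
  using \<open>p \<le> q\<close>
proof (induction p)
  case 0
  have "mat n c (\<lambda>(i,j). \<Sum>l<0. V $$ (i,l) * F $$ (l,j)) = (0\<^sub>m n c :: 'a mat)"
    by (rule eq_matI) auto
  then show ?case by (simp only: vec_space.rank_0I)
next
  case (Suc p)
  let ?S = "mat n c (\<lambda>(i,j). \<Sum>l<p. V $$ (i,l) * F $$ (l,j))"
  let ?O = "mat n c (\<lambda>(i,j). V $$ (i,p) * F $$ (p,j)) :: 'a mat"
  have "mat n c (\<lambda>(i,j). \<Sum>l<Suc p. V $$ (i,l) * F $$ (l,j)) = ?S + ?O"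
    by (rule eq_matI) auto
  moreover have "vec_space.rank n ?O \<le> 1"
    by (rule vec_space.rank_le_1_product_entries[where f = "\<lambda>i. V $$ (i,p)" and g = "\<lambda>j. F $$ (p,j)"])
      auto
  moreover have "vec_space.rank n (?S + ?O) \<le> vec_space.rank n ?S + vec_space.rank n ?O"
    by (rule vec_space.rank_subadditive) auto
  ultimately show ?case using Suc by simp
qed

lemma rank_mult_le_inner_dim:
  fixes V F :: "'a :: field mat"
  assumes V: "V \<in> carrier_mat n q" and F: "F \<in> carrier_mat q c"
  shows "mat_rank (V * F) \<le> q"
proof -
  have "V * F = mat n c (\<lambda>(i,j). \<Sum>l<q. V $$ (i,l) * F $$ (l,j))"
    using V F by (intro eq_matI) (auto simp: scalar_prod_def lessThan_atLeast0)
  then show ?thesis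
    using rank_sum_outer_products_le[OF V F order.refl] V unfolding mat_rank_def by simp
qed

lemma power_mult_rotate:
  fixes V F :: "'a :: semiring_1 mat"
  assumes V: "V \<in> carrier_mat n q" and F: "F \<in> carrier_mat q n"
  shows "(V * F) ^\<^sub>m Suc k = V * (F * V) ^\<^sub>m k * F"
proof (induction k)
  case 0
  then show ?case using V F by simp
next
  case (Suc k)
  have P: "(F * V) ^\<^sub>m k \<in> carrier_mat q q" using V F by auto
  have VP: "V * (F * V) ^\<^sub>m k \<in> carrier_mat n q" using V P by simp
  have "(V * F) ^\<^sub>m Suc (Suc k) = V * (F * V) ^\<^sub>m k * F * (V * F)"
    using Suc by simp
  also have "\<dots> = V * (F * V) ^\<^sub>m k * (F * V) * F"
    using VP V F by (simp add: assoc_mult_mat[OF VP F mult_carrier_mat[OF V F]]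
        assoc_mult_mat[OF VP mult_carrier_mat[OF F V] F] assoc_mult_mat[OF F V F])
  also have "\<dots> = V * (F * V) ^\<^sub>m Suc k * F"
    using V P by (simp add: assoc_mult_mat[OF V P mult_carrier_mat[OF F V]])
  finally show ?case .
qed

lemma schwarz_projection_decompose:
  fixes R K A Ai G F :: "'a :: ring_1 mat"
  assumes R: "R \<in> carrier_mat p n" and K: "K \<in> carrier_mat n n"
    and A: "A \<in> carrier_mat p p" and Ai: "Ai \<in> carrier_mat p p" and inv: "Ai * A = 1\<^sub>m p"
    and G: "G \<in> carrier_mat p q" and F: "F \<in> carrier_mat q n"
    and split: "R * K = A * R + G * F"
  shows "transpose_mat R * Ai * R * K = transpose_mat R * R + transpose_mat R * (Ai * G) * F"
proof -
  have Rt: "transpose_mat R \<in> carrier_mat n p" using R by simp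
  have "transpose_mat R * Ai * R * K = transpose_mat R * Ai * (A * R + G * F)"
    using assoc_mult_mat[OF mult_carrier_mat[OF Rt Ai] R K] by (simp add: split)
  also have "\<dots> = transpose_mat R * Ai * (A * R) + transpose_mat R * Ai * (G * F)"
    using mult_add_distrib_mat[OF mult_carrier_mat[OF Rt Ai] mult_carrier_mat[OF A R]
        mult_carrier_mat[OF G F]] .
  also have "transpose_mat R * Ai * (A * R) = transpose_mat R * (Ai * A) * R"
    using assoc_mult_mat[OF Rt Ai mult_carrier_mat[OF A R]] assoc_mult_mat[OF Ai A R]
      assoc_mult_mat[OF Rt mult_carrier_mat[OF Ai A] R] by simp
  also have "transpose_mat R * Ai * (G * F) = transpose_mat R * (Ai * G) * F"
    using assoc_mult_mat[OF Rt Ai mult_carrier_mat[OF G F]] assoc_mult_mat[OF Ai G F]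
      assoc_mult_mat[OF Rt mult_carrier_mat[OF Ai G] F] by simp
  also have "transpose_mat R * (Ai * A) * R = transpose_mat R * R"
    using Rt by (simp add: inv)
  finally show ?thesis .
qed

lemma product_of_corrections_factor:
  fixes D1 D2 W1 W2 F1 F2 :: "'a :: ring_1 mat"
  assumes D: "D1 \<in> carrier_mat n n" "D2 \<in> carrier_mat n n"
    and W: "W1 \<in> carrier_mat n q" "W2 \<in> carrier_mat n q"
    and F: "F1 \<in> carrier_mat q n" "F2 \<in> carrier_mat q n"
    and D2_D1: "D2 * D1 = 0\<^sub>m n n" and F1_D1: "F1 * D1 = 0\<^sub>m q n"
  shows "(D2 - W2 * F1) * (D1 - W1 * F2) = (W2 * (F1 * W1) - D2 * W1) * F2"
proof -
  have DW: "D2 - W2 * F1 \<in> carrier_mat n n"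
    using minus_carrier_mat[OF mult_carrier_mat[OF W(2) F(1)]] .
  have "(D2 - W2 * F1) * (D1 - W1 * F2) = (D2 - W2 * F1) * D1 - (D2 - W2 * F1) * W1 * F2"
    using mult_minus_distrib_mat[OF DW D(1) mult_carrier_mat[OF W(1) F(2)]]
      assoc_mult_mat[OF DW W(1) F(2)] by simp
  also have "(D2 - W2 * F1) * D1 = 0\<^sub>m n n"
    using D W F by (simp add: minus_mult_distrib_mat[of _ n n] D2_D1 F1_D1)
  also have "(D2 - W2 * F1) * W1 = - (W2 * (F1 * W1) - D2 * W1)"
    using D W F by (simp add: minus_mult_distrib_mat[of _ n n] assoc_mult_mat[of _ n q])
      (intro eq_matI, auto)
  also have "0\<^sub>m n n - - (W2 * (F1 * W1) - D2 * W1) * F2 = (W2 * (F1 * W1) - D2 * W1) * F2"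
    using D W F by (intro eq_matI) auto
  finally show ?thesis .
qed

locale two_subdomain_schwarz =
  fixes N m :: nat and AhatH Ahath A B C BH Ch :: "real mat"
  assumes m: "m \<ge> 1"
    and carrier_AhatH: "AhatH \<in> carrier_mat (N*m) (N*m)"
    and carrier_Ahath: "Ahath \<in> carrier_mat (N*m) (N*m)"
    and carrier_A: "A \<in> carrier_mat N N" and carrier_B: "B \<in> carrier_mat N N"
    and carrier_C: "C \<in> carrier_mat N N" and carrier_BH: "BH \<in> carrier_mat N N"
    and carrier_Ch: "Ch \<in> carrier_mat N N"
begin

definition calA :: "real mat" where
  "calA = block3_mat
     AhatH (kron_mat (unit_col m m) BH) (0\<^sub>m (N*m) (N*m))
     (kron_mat (transpose_mat (unit_col m m)) C) A (kron_mat (transpose_mat (unit_col m 1)) B)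
     (0\<^sub>m (N*m) (N*m)) (kron_mat (unit_col m 1) Ch) Ahath"
definition A1 :: "real mat" where
  "A1 = four_block_mat AhatH (kron_mat (unit_col m m) BH) (kron_mat (transpose_mat (unit_col m m)) C) A"
definition A2 :: "real mat" where
  "A2 = four_block_mat A (kron_mat (transpose_mat (unit_col m 1)) B) (kron_mat (unit_col m 1) Ch) Ahath"
definition R1 :: "real mat" where "R1 = append_cols_mat (1\<^sub>m (N*(m+1))) (0\<^sub>m (N*(m+1)) (N*m))"
definition R2 :: "real mat" where "R2 = append_cols_mat (0\<^sub>m (N*(m+1)) (N*m)) (1\<^sub>m (N*(m+1)))"
definition P1proj :: "real mat" where "P1proj = transpose_mat R1 * inv_mat A1 * R1 * calA"
definition P2proj :: "real mat" where "P2proj = transpose_mat R2 * inv_mat A2 * R2 * calA"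
definition Q1 :: "real mat" where "Q1 = 1\<^sub>m (N*(2*m+1)) - P1proj"
definition Q2 :: "real mat" where "Q2 = 1\<^sub>m (N*(2*m+1)) - P2proj"
definition T12 :: "real mat" where "T12 = Q2 * Q1"
definition T21 :: "real mat" where "T21 = Q1 * Q2"
definition X1 :: "real mat" where "X1 = inv_mat A1 * kron_mat (unit_col (m+1) (m+1)) B"
definition X2 :: "real mat" where "X2 = inv_mat A2 * kron_mat (unit_col (m+1) 1) C"
definition PP1 :: "real mat" where "PP1 = sub_block X1 0 0 (N*m) N"
definition Pi1 :: "real mat" where "Pi1 = sub_block X1 (N*m) 0 N N"
definition Pi2 :: "real mat" where "Pi2 = sub_block X2 0 0 N N"
definition PP2 :: "real mat" where "PP2 = sub_block X2 N 0 (N*m) N"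
definition PP :: "nat \<Rightarrow> nat \<Rightarrow> real mat" where
  "PP = (\<lambda>i j. sub_block (if i = 1 then PP1 else PP2) (N*(j-1)) 0 N N)"
definition V1 :: "real mat" where "V1 = (- PP1) @\<^sub>r (Pi2 * PP 1 m) @\<^sub>r (PP2 * PP 1 m)"
definition V2 :: "real mat" where "V2 = (PP1 * PP 2 1) @\<^sub>r (Pi1 * PP 2 1) @\<^sub>r (- PP2)"
definition F1 :: "real mat" where "F1 = kron_mat (transpose_mat (unit_col (2*m+1) m)) (1\<^sub>m N)"
definition F2 :: "real mat" where "F2 = kron_mat (transpose_mat (unit_col (2*m+1) (m+2))) (1\<^sub>m N)"
definition D1 :: "real mat" where "D1 = 1\<^sub>m (N*(2*m+1)) - transpose_mat R1 * R1"
definition D2 :: "real mat" where "D2 = 1\<^sub>m (N*(2*m+1)) - transpose_mat R2 * R2"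
definition W1 :: "real mat" where "W1 = transpose_mat R1 * X1"
definition W2 :: "real mat" where "W2 = transpose_mat R2 * X2"

lemma dim_split: "N*(2*m+1) = N*(m+1) + N*m" "N*(m+1) = N*m + N" "N*(m-1) + N = N*m"
  using m by (simp_all add: algebra_simps)

lemma kron_BH_eq:
  "kron_mat (unit_col m m) BH = mat (N*m) N (\<lambda>(i,j). if N*(m-1) \<le> i then BH $$ (i - N*(m-1), j) else 0)"
  unfolding kron_unit_col[OF carrier_BH] dim_split(3) by (intro eq_matI) auto

lemma kron_C_eq:
  "kron_mat (transpose_mat (unit_col m m)) C
    = mat N (N*m) (\<lambda>(i,j). if N*(m-1) \<le> j then C $$ (i, j - N*(m-1)) else 0)"
  unfolding kron_unit_row[OF carrier_C] dim_split(3) by (intro eq_matI) auto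

lemma kron_B_eq:
  "kron_mat (transpose_mat (unit_col m 1)) B = mat N (N*m) (\<lambda>(i,j). if j < N then B $$ (i, j) else 0)"
  unfolding kron_unit_row[OF carrier_B] by (intro eq_matI) auto

lemma kron_Ch_eq:
  "kron_mat (unit_col m 1) Ch = mat (N*m) N (\<lambda>(i,j). if i < N then Ch $$ (i, j) else 0)"
  unfolding kron_unit_col[OF carrier_Ch] by (intro eq_matI) auto

lemma kron_B_last_eq:
  "kron_mat (unit_col (m+1) (m+1)) B = mat (N*(m+1)) N (\<lambda>(i,j). if N*m \<le> i then B $$ (i - N*m, j) else 0)"
  unfolding kron_unit_col[OF carrier_B] dim_split(2) by (intro eq_matI) auto

lemma kron_C_first_eq:
  "kron_mat (unit_col (m+1) 1) C = mat (N*(m+1)) N (\<lambda>(i,j). if i < N then C $$ (i, j) else 0)"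
  unfolding kron_unit_col[OF carrier_C] by (intro eq_matI) auto

lemma R1_eq: "R1 = row_selector (N*(m+1)) (N*(2*m+1)) 0"
  unfolding R1_def append_cols_mat_def dim_split(1) by (intro eq_matI) (auto simp: row_selector_def)

lemma R2_eq: "R2 = row_selector (N*(m+1)) (N*(2*m+1)) (N*m)"
  unfolding R2_def append_cols_mat_def dim_split(1) by (intro eq_matI) (auto simp: row_selector_def)

lemma F1_eq: "F1 = row_selector N (N*(2*m+1)) (N*(m-1))"
  unfolding F1_def kron_unit_row_one ..

lemma F2_eq: "F2 = row_selector N (N*(2*m+1)) (N*(m+1))"
  unfolding F2_def kron_unit_row_one by simp

lemma D1_eq: "D1 = coord_projection (N*(2*m+1)) (\<lambda>i. N*(m+1) \<le> i)"
  unfolding D1_def R1_eq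
  by (subst transpose_row_selector_mult) (auto intro!: eq_matI simp: coord_projection_def row_selector_def)

lemma D2_eq: "D2 = coord_projection (N*(2*m+1)) (\<lambda>i. i < N*m)"
  unfolding D2_def R2_eq
  by (subst transpose_row_selector_mult)
    (auto intro!: eq_matI simp: coord_projection_def row_selector_def dim_split)

lemma R1_carrier: "R1 \<in> carrier_mat (N*(m+1)) (N*(2*m+1))"
  and R2_carrier: "R2 \<in> carrier_mat (N*(m+1)) (N*(2*m+1))"
  and F1_carrier: "F1 \<in> carrier_mat N (N*(2*m+1))"
  and F2_carrier: "F2 \<in> carrier_mat N (N*(2*m+1))"
  and D1_carrier: "D1 \<in> carrier_mat (N*(2*m+1)) (N*(2*m+1))"
  and D2_carrier: "D2 \<in> carrier_mat (N*(2*m+1)) (N*(2*m+1))"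
  by (simp_all add: R1_eq R2_eq F1_eq F2_eq D1_eq D2_eq)

lemma calA_carrier: "calA \<in> carrier_mat (N*(2*m+1)) (N*(2*m+1))"
  using carrier_AhatH carrier_Ahath carrier_A
  unfolding calA_def block3_mat_def append_cols_mat_def kron_BH_eq kron_C_eq kron_B_eq kron_Ch_eq dim_split
  by auto

lemma A1_carrier: "A1 \<in> carrier_mat (N*(m+1)) (N*(m+1))"
  using carrier_AhatH carrier_A unfolding A1_def kron_BH_eq kron_C_eq dim_split by auto

lemma A2_carrier: "A2 \<in> carrier_mat (N*(m+1)) (N*(m+1))"
  using carrier_Ahath carrier_A unfolding A2_def kron_B_eq kron_Ch_eq dim_split by auto

lemma R1_calA: "R1 * calA = A1 * R1 + kron_mat (unit_col (m+1) (m+1)) B * F2"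
proof -
  have restrict: "R1 * calA = sub_block calA 0 0 (N*(m+1)) (N*(2*m+1))"
    unfolding R1_eq using calA_carrier dim_split(1) by (simp add: row_selector_mult)
  have extend: "A1 * R1 = mat (N*(m+1)) (N*(2*m+1)) (\<lambda>(i,j). if j < N*(m+1) then A1 $$ (i, j) else 0)"
    unfolding R1_eq using A1_carrier by (simp add: mult_row_selector cong: if_cong)
  have coupling: "kron_mat (unit_col (m+1) (m+1)) B * F2 = mat (N*(m+1)) (N*(2*m+1))
      (\<lambda>(i,j). if N*m \<le> i \<and> N*(m+1) \<le> j \<and> j < N*(m+1) + N then B $$ (i - N*m, j - N*(m+1)) else 0)"
    unfolding F2_eq kron_B_last_eq by (subst mult_row_selector) (auto intro!: eq_matI)
  show ?thesis
    unfolding restrict extend coupling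
    using carrier_AhatH carrier_Ahath carrier_A carrier_B
    unfolding calA_def A1_def block3_mat_def append_cols_mat_def append_rows_def
      kron_BH_eq kron_C_eq kron_B_eq kron_Ch_eq dim_split
    by (intro eq_matI) (auto simp: sub_block_def)
qed

lemma R2_calA: "R2 * calA = A2 * R2 + kron_mat (unit_col (m+1) 1) C * F1"
proof -
  have restrict: "R2 * calA = sub_block calA (N*m) 0 (N*(m+1)) (N*(2*m+1))"
    unfolding R2_eq using calA_carrier dim_split(1) by (simp add: row_selector_mult)
  have extend: "A2 * R2 = mat (N*(m+1)) (N*(2*m+1))
      (\<lambda>(i,j). if N*m \<le> j \<and> j < N*m + N*(m+1) then A2 $$ (i, j - N*m) else 0)"
    unfolding R2_eq using A2_carrier by (simp add: mult_row_selector)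
  have coupling: "kron_mat (unit_col (m+1) 1) C * F1 = mat (N*(m+1)) (N*(2*m+1))
      (\<lambda>(i,j). if i < N \<and> N*(m-1) \<le> j \<and> j < N*(m-1) + N then C $$ (i, j - N*(m-1)) else 0)"
    unfolding F1_eq kron_C_first_eq by (subst mult_row_selector) (auto intro!: eq_matI)
  show ?thesis
    unfolding restrict extend coupling
    using carrier_AhatH carrier_Ahath carrier_A carrier_C
    unfolding calA_def A2_def block3_mat_def append_cols_mat_def append_rows_def
      kron_BH_eq kron_C_eq kron_B_eq kron_Ch_eq dim_split
    by (intro eq_matI) (auto simp: sub_block_def)
qed

lemma D2_D1: "D2 * D1 = 0\<^sub>m (N*(2*m+1)) (N*(2*m+1))"
  unfolding D2_eq D1_eq by (subst coord_projection_mult) (auto intro!: eq_matI simp: coord_projection_def)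

lemma D1_D2: "D1 * D2 = 0\<^sub>m (N*(2*m+1)) (N*(2*m+1))"
  unfolding D2_eq D1_eq by (subst coord_projection_mult) (auto intro!: eq_matI simp: coord_projection_def)

lemma F1_D1: "F1 * D1 = 0\<^sub>m N (N*(2*m+1))"
  unfolding F1_eq D1_eq using dim_split m
  by (subst row_selector_mult) (auto intro!: eq_matI simp: coord_projection_def sub_block_def)

lemma F2_D2: "F2 * D2 = 0\<^sub>m N (N*(2*m+1))"
  unfolding F2_eq D2_eq using dim_split m
  by (subst row_selector_mult) (auto intro!: eq_matI simp: coord_projection_def sub_block_def)

end

locale two_subdomain_schwarz_nonsingular = two_subdomain_schwarz +
  assumes invertible_A1: "invertible_mat A1" and invertible_A2: "invertible_mat A2"
begin

lemma X1_carrier: "X1 \<in> carrier_mat (N*(m+1)) N"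
  unfolding X1_def kron_B_last_eq using invertible_inv_mat(1)[OF A1_carrier invertible_A1] by simp

lemma X2_carrier: "X2 \<in> carrier_mat (N*(m+1)) N"
  unfolding X2_def kron_C_first_eq using invertible_inv_mat(1)[OF A2_carrier invertible_A2] by simp

lemma W1_eq: "W1 = mat (N*(2*m+1)) N (\<lambda>(i,j). if i < N*(m+1) then X1 $$ (i, j) else 0)"
  unfolding W1_def R1_eq transpose_row_selector_mult[OF X1_carrier] by (intro eq_matI) auto

lemma W2_eq: "W2 = mat (N*(2*m+1)) N (\<lambda>(i,j). if N*m \<le> i then X2 $$ (i - N*m, j) else 0)"
  unfolding W2_def R2_eq transpose_row_selector_mult[OF X2_carrier] using dim_split
  by (intro eq_matI) auto

lemma W1_carrier: "W1 \<in> carrier_mat (N*(2*m+1)) N"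
  and W2_carrier: "W2 \<in> carrier_mat (N*(2*m+1)) N"
  unfolding W1_eq W2_eq by simp_all

lemma Q1_eq: "Q1 = D1 - W1 * F2"
proof -
  have "P1proj = transpose_mat R1 * R1 + W1 * F2"
    unfolding P1proj_def W1_def X1_def
    using schwarz_projection_decompose[OF R1_carrier calA_carrier A1_carrier
        invertible_inv_mat[OF A1_carrier invertible_A1] _ F2_carrier R1_calA]
    unfolding kron_B_last_eq by simp
  then show ?thesis
    unfolding Q1_def D1_def using R1_carrier W1_carrier F2_carrier by (intro eq_matI) auto
qed

lemma Q2_eq: "Q2 = D2 - W2 * F1"
proof -
  have "P2proj = transpose_mat R2 * R2 + W2 * F1"
    unfolding P2proj_def W2_def X2_def
    using schwarz_projection_decompose[OF R2_carrier calA_carrier A2_carrier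
        invertible_inv_mat[OF A2_carrier invertible_A2] _ F1_carrier R2_calA]
    unfolding kron_C_first_eq by simp
  then show ?thesis
    unfolding Q2_def D2_def using R2_carrier W2_carrier F1_carrier by (intro eq_matI) auto
qed

lemma PP_1_m_eq: "PP 1 m = sub_block X1 (N*(m-1)) 0 N N"
  unfolding PP_def PP1_def sub_block_def using dim_split(3) by (intro eq_matI) auto

lemma PP_2_1_eq: "PP 2 1 = sub_block X2 N 0 N N"
proof -
  have "i < N*m" if "i < N" for i
    using that m by (metis less_le_trans mult.right_neutral mult_le_mono2)
  then show ?thesis unfolding PP_def PP2_def sub_block_def by (intro eq_matI) auto
qed

lemma PP_1_m_carrier: "PP 1 m \<in> carrier_mat N N"
  and PP_2_1_carrier: "PP 2 1 \<in> carrier_mat N N"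
  unfolding PP_1_m_eq PP_2_1_eq sub_block_def by simp_all

lemma F1_W1: "F1 * W1 = PP 1 m"
  unfolding F1_eq PP_1_m_eq using dim_split m
  by (subst row_selector_mult[OF W1_carrier]) (auto simp: W1_eq sub_block_def intro!: eq_matI)

lemma F2_W2: "F2 * W2 = PP 2 1"
  unfolding F2_eq PP_2_1_eq using dim_split m
  by (subst row_selector_mult[OF W2_carrier]) (auto simp: W2_eq sub_block_def intro!: eq_matI)

lemma V1_eq: "V1 = W2 * PP 1 m - D2 * W1"
proof -
  have "W2 * PP 1 m = transpose_mat R2 * (X2 * PP 1 m)"
    unfolding W2_def using R2_carrier X2_carrier PP_1_m_carrier by (simp add: assoc_mult_mat)
  then have W2P: "W2 * PP 1 m
      = mat (N*(2*m+1)) N (\<lambda>(i,j). if N*m \<le> i then (X2 * PP 1 m) $$ (i - N*m, j) else 0)"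
    unfolding R2_eq using X2_carrier PP_1_m_carrier dim_split
    by (subst (asm) transpose_row_selector_mult) (auto intro!: eq_matI)
  have D2W1: "D2 * W1 = mat (N*(2*m+1)) N (\<lambda>(i,j). if i < N*m then X1 $$ (i, j) else 0)"
    unfolding D2_eq coord_projection_mult[OF W1_carrier] by (intro eq_matI) (auto simp: W1_eq dim_split)
  have "Pi2 * PP 1 m = sub_block (X2 * PP 1 m) 0 0 N N"
    and "PP2 * PP 1 m = sub_block (X2 * PP 1 m) N 0 (N*m) N"
    unfolding Pi2_def PP2_def using sub_block_mult[OF X2_carrier PP_1_m_carrier] dim_split by simp_all
  then show ?thesis
    unfolding V1_def W2P D2W1 PP1_def append_rows_def using X2_carrier PP_1_m_carrier
    by (intro eq_matI) (auto simp: sub_block_def dim_split)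
qed

lemma V2_eq: "V2 = W1 * PP 2 1 - D1 * W2"
proof -
  have "W1 * PP 2 1 = transpose_mat R1 * (X1 * PP 2 1)"
    unfolding W1_def using R1_carrier X1_carrier PP_2_1_carrier by (simp add: assoc_mult_mat)
  then have W1P: "W1 * PP 2 1
      = mat (N*(2*m+1)) N (\<lambda>(i,j). if i < N*(m+1) then (X1 * PP 2 1) $$ (i, j) else 0)"
    unfolding R1_eq using X1_carrier PP_2_1_carrier
    by (subst (asm) transpose_row_selector_mult) (auto intro!: eq_matI)
  have D1W2: "D1 * W2 = mat (N*(2*m+1)) N (\<lambda>(i,j). if N*(m+1) \<le> i then X2 $$ (i - N*m, j) else 0)"
    unfolding D1_eq coord_projection_mult[OF W2_carrier] by (intro eq_matI) (auto simp: W2_eq)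
  have "PP1 * PP 2 1 = sub_block (X1 * PP 2 1) 0 0 (N*m) N"
    and "Pi1 * PP 2 1 = sub_block (X1 * PP 2 1) (N*m) 0 N N"
    unfolding PP1_def Pi1_def using sub_block_mult[OF X1_carrier PP_2_1_carrier] dim_split by simp_all
  then show ?thesis
    unfolding V2_def W1P D1W2 PP2_def append_rows_def using X1_carrier PP_2_1_carrier
    by (intro eq_matI) (auto simp: sub_block_def dim_split)
qed

lemma V1_carrier: "V1 \<in> carrier_mat (N*(2*m+1)) N"
  unfolding V1_eq using minus_carrier_mat mult_carrier_mat[OF D2_carrier W1_carrier] .

lemma V2_carrier: "V2 \<in> carrier_mat (N*(2*m+1)) N"
  unfolding V2_eq using minus_carrier_mat mult_carrier_mat[OF D1_carrier W2_carrier] .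

lemma F2_V1: "F2 * V1 = PP 2 1 * PP 1 m"
proof -
  have "F2 * V1 = F2 * W2 * PP 1 m - F2 * D2 * W1"
    unfolding V1_eq
    using mult_minus_distrib_mat[OF F2_carrier mult_carrier_mat[OF W2_carrier PP_1_m_carrier]
        mult_carrier_mat[OF D2_carrier W1_carrier]]
      assoc_mult_mat[OF F2_carrier W2_carrier PP_1_m_carrier]
      assoc_mult_mat[OF F2_carrier D2_carrier W1_carrier]
    by simp
  also have "\<dots> = PP 2 1 * PP 1 m"
    unfolding F2_W2 F2_D2 using W1_carrier PP_2_1_carrier PP_1_m_carrier by (intro eq_matI) auto
  finally show ?thesis .
qed

lemma F1_V2: "F1 * V2 = PP 1 m * PP 2 1"
proof -
  have "F1 * V2 = F1 * W1 * PP 2 1 - F1 * D1 * W2"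
    unfolding V2_eq
    using mult_minus_distrib_mat[OF F1_carrier mult_carrier_mat[OF W1_carrier PP_2_1_carrier]
        mult_carrier_mat[OF D1_carrier W2_carrier]]
      assoc_mult_mat[OF F1_carrier W1_carrier PP_2_1_carrier]
      assoc_mult_mat[OF F1_carrier D1_carrier W2_carrier]
    by simp
  also have "\<dots> = PP 1 m * PP 2 1"
    unfolding F1_W1 F1_D1 using W2_carrier PP_2_1_carrier PP_1_m_carrier by (intro eq_matI) auto
  finally show ?thesis .
qed

lemma T12_eq: "T12 = V1 * F2"
  unfolding T12_def Q1_eq Q2_eq V1_eq F1_W1[symmetric]
  by (rule product_of_corrections_factor[OF D1_carrier D2_carrier W1_carrier W2_carrier
        F1_carrier F2_carrier D2_D1 F1_D1])

lemma T21_eq: "T21 = V2 * F1"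
  unfolding T21_def Q1_eq Q2_eq V2_eq F2_W2[symmetric]
  by (rule product_of_corrections_factor[OF D2_carrier D1_carrier W2_carrier W1_carrier
        F2_carrier F1_carrier D1_D2 F2_D2])

end

theorem lemma3p1:
  fixes N m :: nat
    and AhatH Ahath A B C BH Ch :: "real mat"
    and calA A1 A2 R1 R2 P1proj P2proj Q1 Q2 T12 T21 :: "real mat"
    and X1 X2 PP1 PP2 Pi1 Pi2 V1 V2 :: "real mat"
    and PP :: "nat \<Rightarrow> nat \<Rightarrow> real mat"
  assumes N: "N \<ge> 1" and m: "m \<ge> 1"
    and dAH: "AhatH \<in> carrier_mat (N*m) (N*m)" and dAh: "Ahath \<in> carrier_mat (N*m) (N*m)"
    and dA: "A \<in> carrier_mat N N" and dB: "B \<in> carrier_mat N N" and dC: "C \<in> carrier_mat N N"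
    and dBH: "BH \<in> carrier_mat N N" and dCh: "Ch \<in> carrier_mat N N"
  defines "calA \<equiv> block3_mat
       AhatH (kron_mat (unit_col m m) BH) (0\<^sub>m (N*m) (N*m))
       (kron_mat (transpose_mat (unit_col m m)) C) A (kron_mat (transpose_mat (unit_col m 1)) B)
       (0\<^sub>m (N*m) (N*m)) (kron_mat (unit_col m 1) Ch) Ahath"
    and "A1 \<equiv> four_block_mat AhatH (kron_mat (unit_col m m) BH)
                 (kron_mat (transpose_mat (unit_col m m)) C) A"
    and "A2 \<equiv> four_block_mat A (kron_mat (transpose_mat (unit_col m 1)) B)
                 (kron_mat (unit_col m 1) Ch) Ahath"
    and "R1 \<equiv> append_cols_mat (1\<^sub>m (N*(m+1))) (0\<^sub>m (N*(m+1)) (N*m))"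
    and "R2 \<equiv> append_cols_mat (0\<^sub>m (N*(m+1)) (N*m)) (1\<^sub>m (N*(m+1)))"
    and "P1proj \<equiv> transpose_mat R1 * inv_mat A1 * R1 * calA"
    and "P2proj \<equiv> transpose_mat R2 * inv_mat A2 * R2 * calA"
    and "Q1 \<equiv> 1\<^sub>m (N*(2*m+1)) - P1proj"
    and "Q2 \<equiv> 1\<^sub>m (N*(2*m+1)) - P2proj"
    and "T12 \<equiv> Q2 * Q1"
    and "T21 \<equiv> Q1 * Q2"
    and "X1 \<equiv> inv_mat A1 * kron_mat (unit_col (m+1) (m+1)) B"
    and "X2 \<equiv> inv_mat A2 * kron_mat (unit_col (m+1) 1) C"
    and "PP1 \<equiv> sub_block X1 0 0 (N*m) N"
    and "Pi1 \<equiv> sub_block X1 (N*m) 0 N N"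
    and "Pi2 \<equiv> sub_block X2 0 0 N N"
    and "PP2 \<equiv> sub_block X2 N 0 (N*m) N"
    and "PP \<equiv> (\<lambda>i j. sub_block (if i = 1 then PP1 else PP2) (N*(j-1)) 0 N N)"
    and "V1 \<equiv> (- PP1) @\<^sub>r (Pi2 * PP 1 m) @\<^sub>r (PP2 * PP 1 m)"
    and "V2 \<equiv> (PP1 * PP 2 1) @\<^sub>r (Pi1 * PP 2 1) @\<^sub>r (- PP2)"
  assumes inv1: "invertible_mat A1" and inv2: "invertible_mat A2"
  shows "mat_rank T12 \<le> N \<and> mat_rank T21 \<le> N \<and>
    (\<forall>k::nat.
      T12 ^\<^sub>m (k+1) = V1 * (PP 2 1 * PP 1 m) ^\<^sub>m k
                          * kron_mat (transpose_mat (unit_col (2*m+1) (m+2))) (1\<^sub>m N) \<and>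
      T21 ^\<^sub>m (k+1) = V2 * (PP 1 m * PP 2 1) ^\<^sub>m k
                          * kron_mat (transpose_mat (unit_col (2*m+1) m)) (1\<^sub>m N))"
proof -
  interpret S: two_subdomain_schwarz N m AhatH Ahath A B C BH Ch
    using m dAH dAh dA dB dC dBH dCh by unfold_locales
  interpret S: two_subdomain_schwarz_nonsingular N m AhatH Ahath A B C BH Ch
    using inv1 inv2 unfolding assms(11,12) S.A1_def[symmetric] S.A2_def[symmetric] by unfold_locales
  have defs: "T12 = S.T12" "T21 = S.T21" "V1 = S.V1" "V2 = S.V2" "PP = S.PP"
    unfolding assms(10-29) S.T12_def S.T21_def S.Q1_def S.Q2_def S.P1proj_def S.P2proj_def
      S.calA_def S.A1_def S.A2_def S.R1_def S.R2_def S.X1_def S.X2_def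
      S.PP1_def S.PP2_def S.Pi1_def S.Pi2_def S.PP_def S.V1_def S.V2_def
    by (rule refl)+
  show ?thesis
    unfolding defs S.T12_eq S.T21_eq S.F1_def[symmetric] S.F2_def[symmetric]
    using rank_mult_le_inner_dim[OF S.V1_carrier S.F2_carrier]
      rank_mult_le_inner_dim[OF S.V2_carrier S.F1_carrier]
      power_mult_rotate[OF S.V1_carrier S.F2_carrier] power_mult_rotate[OF S.V2_carrier S.F1_carrier]
    by (simp add: S.F2_V1 S.F1_V2)
qed

end
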